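(* Let $f$ be a periodic traveling wave of speed $c$ with $c\neq0$ and $c^2\neq 1$. If $\lambda\in\mathbb{R}\setminus\{0\}$ belongs to $\sigma(\mathrm{P})$, then one of the Floquet multipliers $\rho$ of (P) at $\lambda$ satisfies $\rho^2=1$.
   Context: A traveling wave of speed $c$ is a real solution $f$ of $(c^2-1)f''+\sin f=0$, with energy $E$ given by $\tfrac12(c^2-1)(f')^2+1-\cos f=E$; periodic traveling waves are librational ($0<E<2$) or rotational ($E<0$ if $c^2<1$, $E>2$ if $c^2>1$), with fundamental period $T$ (smallest $T>0$ with $f(z+T)=f(z)\pmod{2\pi}$). Let $\gamma=1/(c^2-1)$. Equation (P): $p''-2c\gamma\lambda p'+\gamma(\lambda^2+\cos f(z))p=0$, written as a first-order system for $(p,p')$; its monodromy matrix is $F(T;\lambda)$ where $F$ is the fundamental matrix with $F(0;\lambda)=I$, and its Floquet multipliers are the eigenvalues of the monodromy matrix. $\sigma(\mathrm{P})$ is the set of $\lambda\in\mathbb{C}$ for which (P) has a nontrivial solution bounded on $\mathbb{R}$. *)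

theory Defs
  imports "HOL-Analysis.Analysis"
begin

definition tw_gamma :: "real \<Rightarrow> real" where
  "tw_gamma c = 1 / (c\<^sup>2 - 1)"

definition traveling_wave :: "real \<Rightarrow> (real \<Rightarrow> real) \<Rightarrow> bool" where
  "traveling_wave c f \<longleftrightarrow>
     (\<exists>f' f''. \<forall>z. (f has_real_derivative f' z) (at z) \<and>
                    (f' has_real_derivative f'' z) (at z) \<and>
                    (c\<^sup>2 - 1) * f'' z + sin (f z) = 0)"

definition tw_energy :: "real \<Rightarrow> (real \<Rightarrow> real) \<Rightarrow> real \<Rightarrow> bool" where
  "tw_energy c f E \<longleftrightarrow>
     (\<forall>z. (1/2) * (c\<^sup>2 - 1) * (deriv f z)\<^sup>2 + 1 - cos (f z) = E)"

definition period_mod_2pi :: "(real \<Rightarrow> real) \<Rightarrow> real \<Rightarrow> bool" where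
  "period_mod_2pi f T \<longleftrightarrow> (\<forall>z. \<exists>k::int. f (z + T) = f z + 2 * pi * of_int k)"

definition fundamental_period :: "(real \<Rightarrow> real) \<Rightarrow> real \<Rightarrow> bool" where
  "fundamental_period f T \<longleftrightarrow>
     T > 0 \<and> period_mod_2pi f T \<and> (\<forall>S. 0 < S \<and> S < T \<longrightarrow> \<not> period_mod_2pi f S)"

text \<open>Periodic traveling wave: librational or rotational traveling wave
  (with a fundamental period T).\<close>
definition periodic_traveling_wave :: "real \<Rightarrow> (real \<Rightarrow> real) \<Rightarrow> real \<Rightarrow> bool" where
  "periodic_traveling_wave c f T \<longleftrightarrow>
     traveling_wave c f \<and> fundamental_period f T \<and>
     (\<exists>E. tw_energy c f E \<and>
          ((0 < E \<and> E < 2) \<or> (c\<^sup>2 < 1 \<and> E < 0) \<or> (c\<^sup>2 > 1 \<and> E > 2)))"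

text \<open>Coefficient matrix of (P) written as a first order system for Y = (p, p'):
  component 1 is p, component 2 is p'.\<close>
definition P_matrix :: "real \<Rightarrow> (real \<Rightarrow> real) \<Rightarrow> complex \<Rightarrow> real \<Rightarrow> complex^2^2" where
  "P_matrix c f lam z =
     (\<chi> i j. if i = 1 then (if j = 1 then 0 else 1)
             else (if j = 1 then - of_real (tw_gamma c) * (lam\<^sup>2 + of_real (cos (f z)))
                   else 2 * of_real c * of_real (tw_gamma c) * lam))"

definition fundamental_matrix ::
    "real \<Rightarrow> (real \<Rightarrow> real) \<Rightarrow> complex \<Rightarrow> (real \<Rightarrow> complex^2^2) \<Rightarrow> bool" where
  "fundamental_matrix c f lam F \<longleftrightarrow>
     F 0 = mat 1 \<and>
     (\<forall>z. (F has_vector_derivative (P_matrix c f lam z ** F z)) (at z))"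

definition monodromy :: "real \<Rightarrow> (real \<Rightarrow> real) \<Rightarrow> real \<Rightarrow> complex \<Rightarrow> complex^2^2" where
  "monodromy c f T lam = (THE M. \<exists>F. fundamental_matrix c f lam F \<and> M = F T)"

definition floquet_multiplier :: "real \<Rightarrow> (real \<Rightarrow> real) \<Rightarrow> real \<Rightarrow> complex \<Rightarrow> complex \<Rightarrow> bool" where
  "floquet_multiplier c f T lam rho \<longleftrightarrow>
     (\<exists>v. v \<noteq> 0 \<and> monodromy c f T lam *v v = rho *s v)"

definition solves_P :: "real \<Rightarrow> (real \<Rightarrow> real) \<Rightarrow> complex \<Rightarrow> (real \<Rightarrow> complex) \<Rightarrow> bool" where
  "solves_P c f lam p \<longleftrightarrow>
     (\<exists>p' p''. \<forall>z. (p has_vector_derivative p' z) (at z) \<and>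
                    (p' has_vector_derivative p'' z) (at z) \<and>
                    p'' z - 2 * of_real c * of_real (tw_gamma c) * lam * p' z
                      + of_real (tw_gamma c) * (lam\<^sup>2 + of_real (cos (f z))) * p z = 0)"

definition sigma_P :: "real \<Rightarrow> (real \<Rightarrow> real) \<Rightarrow> complex set" where
  "sigma_P c f = {lam. \<exists>p. solves_P c f lam p \<and> (\<exists>z. p z \<noteq> 0) \<and> bounded (range p)}"

end

theory Submission
  imports Defs
begin

text \<open>Written as a first-order system, (P) is a damped Hill equation
  \<open>p'' = \<tau> p' - B(z) p\<close> with \<open>\<tau> = 2 c \<gamma> \<lambda> \<noteq> 0\<close> and a \<open>T\<close>-periodic potential \<open>B\<close>.
  By Abel's identity the monodromy matrix \<open>M\<close> is real with \<open>det M = exp (\<tau> T) \<noteq> 1\<close>.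
  A nontrivial bounded solution yields a bounded two-sided orbit \<open>x\<^sub>n = M\<^sup>n x\<^sub>0\<close> of
  phase vectors; the areas spanned by consecutive points get multiplied by \<open>det M\<close> at each step, so they
  vanish, \<open>x\<^sub>0\<close> is an eigenvector, and boundedness in both directions forces its eigenvalue \<open>\<rho>\<close>
  onto the unit circle. A non-real \<open>\<rho>\<close> would be accompanied by the root \<open>cnj \<rho>\<close> of the
  real characteristic polynomial, giving \<open>det M = \<rho> cnj \<rho> = 1\<close>; hence \<open>\<rho> = \<plusminus>1\<close>.
  The fundamental matrix itself is built from the Picard series of the real system.\<close>

section \<open>Linear second-order equations with continuous coefficients\<close>

definition antideriv :: "(real \<Rightarrow> real) \<Rightarrow> real \<Rightarrow> real" where
  "antideriv g = (SOME G. G 0 = 0 \<and> (\<forall>x. (G has_real_derivative g x) (at x)))"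

lemma antideriv:
  assumes "\<And>x. isCont g x"
  shows antideriv_0: "antideriv g 0 = 0"
    and has_real_derivative_antideriv: "(antideriv g has_real_derivative g x) (at x)"
proof -
  obtain G where G: "\<And>x::real. (G has_vector_derivative g x) (at x)"
    using einterval_antiderivative[of "-\<infinity>" "\<infinity>" g] assms by auto
  have "\<exists>G. G 0 = 0 \<and> (\<forall>x. (G has_real_derivative g x) (at x))"
    by (rule exI[of _ "\<lambda>x. G x - G 0"])
       (auto simp: has_real_derivative_iff_has_vector_derivative intro!: derivative_eq_intros G)
  from someI_ex[OF this] show "antideriv g 0 = 0" "(antideriv g has_real_derivative g x) (at x)"
    unfolding antideriv_def by auto
qed

lemma abs_le_integrated_power_bound_nonneg:
  fixes g g' :: "real \<Rightarrow> real"
  assumes g: "\<And>x. (g has_real_derivative g' x) (at x)" "g 0 = 0"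
    and g': "\<And>s. 0 \<le> s \<Longrightarrow> s \<le> z \<Longrightarrow> \<bar>g' s\<bar> \<le> M * s ^ n" and "0 \<le> z"
  shows "\<bar>g z\<bar> \<le> M * z ^ Suc n / Suc n"
proof -
  define H where "H s = M * s ^ Suc n / Suc n" for s
  have H: "(H has_real_derivative M * s ^ n) (at s)" for s
    unfolding H_def using DERIV_cdivide[OF DERIV_cmult[OF DERIV_pow[of "Suc n" s]], of M "Suc n"]
    by simp
  have cont: "continuous_on {0..z} (\<lambda>s. H s - g s)" "continuous_on {0..z} (\<lambda>s. H s + g s)"
    using DERIV_isCont[OF H] DERIV_isCont[OF g(1)]
    by (intro continuous_at_imp_continuous_on ballI continuous_intros; blast)+
  have "H 0 - g 0 \<le> H z - g z"
  proof (rule DERIV_nonneg_imp_increasing_open[OF \<open>0 \<le> z\<close> _ cont(1)])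
    fix s assume "0 < s" "s < z"
    then show "\<exists>y. ((\<lambda>s. H s - g s) has_real_derivative y) (at s) \<and> 0 \<le> y"
      using g'[of s] by (intro exI[of _ "M * s ^ n - g' s"]) (auto intro!: DERIV_diff H g(1))
  qed
  moreover have "H 0 + g 0 \<le> H z + g z"
  proof (rule DERIV_nonneg_imp_increasing_open[OF \<open>0 \<le> z\<close> _ cont(2)])
    fix s assume "0 < s" "s < z"
    then show "\<exists>y. ((\<lambda>s. H s + g s) has_real_derivative y) (at s) \<and> 0 \<le> y"
      using g'[of s] by (intro exI[of _ "M * s ^ n + g' s"]) (auto intro!: DERIV_add H g(1))
  qed
  ultimately show ?thesis using g(2) by (auto simp: H_def)
qed

lemma abs_le_integrated_power_bound:
  fixes g g' :: "real \<Rightarrow> real"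
  assumes g: "\<And>x. (g has_real_derivative g' x) (at x)" "g 0 = 0"
    and g': "\<And>s. \<bar>s\<bar> \<le> N \<Longrightarrow> \<bar>g' s\<bar> \<le> M * \<bar>s\<bar> ^ n" and z: "\<bar>z\<bar> \<le> N"
  shows "\<bar>g z\<bar> \<le> M * \<bar>z\<bar> ^ Suc n / Suc n"
proof (cases "z \<ge> 0")
  case True
  have "\<bar>g z\<bar> \<le> M * z ^ Suc n / Suc n"
  proof (rule abs_le_integrated_power_bound_nonneg[OF g _ True])
    fix s assume "0 \<le> s" "s \<le> z"
    then show "\<bar>g' s\<bar> \<le> M * s ^ n"
      using g'[of s] z by simp
  qed
  then show ?thesis
    using True by simp
next
  case False
  have mirror: "((\<lambda>s. g (- s)) has_real_derivative - g' (- x)) (at x)" for x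
    using DERIV_mirror g(1) by blast
  have "\<bar>g (- (- z))\<bar> \<le> M * (- z) ^ Suc n / Suc n"
  proof (rule abs_le_integrated_power_bound_nonneg[OF mirror])
    fix s assume "0 \<le> s" "s \<le> - z"
    then show "\<bar>- g' (- s)\<bar> \<le> M * s ^ n"
      using g'[of "- s"] z by simp
  qed (use False g(2) in auto)
  then show ?thesis
    using False by simp
qed

lemma isCont_bounded_on_interval:
  fixes h :: "real \<Rightarrow> real"
  assumes "\<And>x. isCont h x"
  obtains K where "K \<ge> 1" "\<And>s. \<bar>s\<bar> \<le> N \<Longrightarrow> \<bar>h s\<bar> \<le> K"
proof -
  have "compact (h ` {-N..N})"
    by (intro compact_continuous_image continuous_at_imp_continuous_on ballI assms) auto
  then obtain B where B: "\<forall>y\<in>h ` {-N..N}. \<bar>y\<bar> \<le> B"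
    using compact_imp_bounded bounded_iff by (metis real_norm_def)
  show thesis
  proof (rule that[of "max 1 B"])
    fix s assume "\<bar>s\<bar> \<le> N"
    then have "\<bar>h s\<bar> \<le> B"
      using B by (simp add: abs_le_iff)
    then show "\<bar>h s\<bar> \<le> max 1 B"
      by simp
  qed simp
qed

lemma has_real_derivative_suminf:
  fixes g g' :: "nat \<Rightarrow> real \<Rightarrow> real"
  assumes deriv: "\<And>n y. (g n has_real_derivative g' n y) (at y)"
    and majorant: "\<And>n y. \<bar>y\<bar> \<le> N \<Longrightarrow> \<bar>g' n y\<bar> \<le> m n" "summable m"
    and "summable (\<lambda>n. g n 0)" and "\<bar>x\<bar> < N"
  shows "((\<lambda>z. \<Sum>n. g n z) has_real_derivative (\<Sum>n. g' n x)) (at x)"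
proof (rule has_field_derivative_series'(2))
  show "convex {-N..N}" "0 \<in> {-N..N}" "x \<in> interior {-N..N}"
    using \<open>\<bar>x\<bar> < N\<close> by auto
  show "(g n has_field_derivative g' n y) (at y within {-N..N})" for n y
    by (rule has_field_derivative_at_within[OF deriv])
  show "uniformly_convergent_on {-N..N} (\<lambda>n y. \<Sum>i<n. g' i y)"
    using majorant by (intro Weierstrass_m_test'[where M = m]) auto
qed fact

text \<open>Picard iteration, term by term: \<open>(\<Sum>n. U n, \<Sum>n. V n)\<close> below solves
  \<open>u' = v, v' = al v + be u\<close> with \<open>u 0 = a, v 0 = b\<close>.\<close>
primrec picard_terms ::
    "(real \<Rightarrow> real) \<Rightarrow> (real \<Rightarrow> real) \<Rightarrow> real \<Rightarrow> real \<Rightarrow> nat \<Rightarrow> (real \<Rightarrow> real) \<times> (real \<Rightarrow> real)"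
where
  "picard_terms al be a b 0 = (\<lambda>_. a, \<lambda>_. b)"
| "picard_terms al be a b (Suc n) =
     (antideriv (snd (picard_terms al be a b n)),
      antideriv (\<lambda>s. al s * snd (picard_terms al be a b n) s + be s * fst (picard_terms al be a b n) s))"

context
  fixes al be :: "real \<Rightarrow> real" and a b :: real
  assumes isCont_al: "\<And>x. isCont al x" and isCont_be: "\<And>x. isCont be x"
begin

abbreviation "U n \<equiv> fst (picard_terms al be a b n)"
abbreviation "V n \<equiv> snd (picard_terms al be a b n)"

lemma isCont_picard_terms: "isCont (U n) x \<and> isCont (V n) x"
proof (induction n arbitrary: x)
  case (Suc n)
  have "\<And>x. isCont (\<lambda>s. al s * V n s + be s * U n s) x"
    using Suc isCont_al isCont_be by (auto intro!: continuous_intros)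
  then show ?case
    using DERIV_isCont[OF has_real_derivative_antideriv] Suc by simp
qed simp

lemma picard_terms_Suc:
  "(U (Suc n) has_real_derivative V n x) (at x)"
  "(V (Suc n) has_real_derivative al x * V n x + be x * U n x) (at x)"
  "U (Suc n) 0 = 0" "V (Suc n) 0 = 0"
proof -
  have "\<And>x. isCont (\<lambda>s. al s * V n s + be s * U n s) x"
    using isCont_picard_terms isCont_al isCont_be by (auto intro!: continuous_intros)
  then show "(U (Suc n) has_real_derivative V n x) (at x)"
    "(V (Suc n) has_real_derivative al x * V n x + be x * U n x) (at x)"
    "U (Suc n) 0 = 0" "V (Suc n) 0 = 0"
    using antideriv[of "V n"] antideriv[of "\<lambda>s. al s * V n s + be s * U n s"] isCont_picard_terms
    by auto
qed

lemma picard_terms_le: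
  assumes K: "K \<ge> 1" "\<And>s. \<bar>s\<bar> \<le> N \<Longrightarrow> \<bar>al s\<bar> + \<bar>be s\<bar> \<le> K" and z: "\<bar>z\<bar> \<le> N"
  shows "\<bar>U n z\<bar> \<le> (\<bar>a\<bar> + \<bar>b\<bar>) * K ^ n * \<bar>z\<bar> ^ n / fact n \<and>
         \<bar>V n z\<bar> \<le> (\<bar>a\<bar> + \<bar>b\<bar>) * K ^ n * \<bar>z\<bar> ^ n / fact n"
  using z
proof (induction n arbitrary: z)
  case (Suc n)
  define C where "C = \<bar>a\<bar> + \<bar>b\<bar>"
  have C: "C \<ge> 0" unfolding C_def by simp
  have IH: "\<bar>U n s\<bar> \<le> C * K ^ n / fact n * \<bar>s\<bar> ^ n \<and> \<bar>V n s\<bar> \<le> C * K ^ n / fact n * \<bar>s\<bar> ^ n"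
    if "\<bar>s\<bar> \<le> N" for s
    using Suc.IH[OF that] unfolding C_def by (simp add: field_simps)
  have "\<bar>U (Suc n) z\<bar> \<le> C * K ^ n / fact n * \<bar>z\<bar> ^ Suc n / Suc n"
    by (rule abs_le_integrated_power_bound[OF picard_terms_Suc(1,3)]) (use IH Suc.prems in auto)
  also have "\<dots> = C * K ^ n * \<bar>z\<bar> ^ Suc n / fact (Suc n)"
    by (simp add: field_simps)
  also have "\<dots> \<le> C * K ^ Suc n * \<bar>z\<bar> ^ Suc n / fact (Suc n)"
    using K(1) C by (intro divide_right_mono mult_right_mono mult_left_mono power_increasing) auto
  finally have U: "\<bar>U (Suc n) z\<bar> \<le> C * K ^ Suc n * \<bar>z\<bar> ^ Suc n / fact (Suc n)" .
  have V': "\<bar>al s * V n s + be s * U n s\<bar> \<le> C * K ^ Suc n / fact n * \<bar>s\<bar> ^ n"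
    if s: "\<bar>s\<bar> \<le> N" for s
  proof -
    have "\<bar>al s * V n s + be s * U n s\<bar> \<le> \<bar>al s\<bar> * \<bar>V n s\<bar> + \<bar>be s\<bar> * \<bar>U n s\<bar>"
      by (simp add: abs_mult[symmetric] abs_triangle_ineq)
    also have "\<dots> \<le> \<bar>al s\<bar> * (C * K ^ n / fact n * \<bar>s\<bar> ^ n) + \<bar>be s\<bar> * (C * K ^ n / fact n * \<bar>s\<bar> ^ n)"
      using IH[OF s] by (intro add_mono mult_left_mono) auto
    also have "\<dots> = (\<bar>al s\<bar> + \<bar>be s\<bar>) * (C * K ^ n / fact n * \<bar>s\<bar> ^ n)"
      by (rule distrib_right[symmetric])
    also have "\<dots> \<le> K * (C * K ^ n / fact n * \<bar>s\<bar> ^ n)"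
      using K(2)[OF s] C by (intro mult_right_mono) auto
    finally show ?thesis by (simp add: field_simps)
  qed
  have "\<bar>V (Suc n) z\<bar> \<le> C * K ^ Suc n / fact n * \<bar>z\<bar> ^ Suc n / Suc n"
    by (rule abs_le_integrated_power_bound[OF picard_terms_Suc(2,4)]) (use V' Suc.prems in auto)
  also have "\<dots> = C * K ^ Suc n * \<bar>z\<bar> ^ Suc n / fact (Suc n)"
    by (simp add: field_simps)
  finally show ?case using U unfolding C_def by simp
qed simp

lemma picard_terms_summable_majorant:
  obtains m where "summable m" "\<And>n z. \<bar>z\<bar> \<le> N \<Longrightarrow> \<bar>U n z\<bar> \<le> m n \<and> \<bar>V n z\<bar> \<le> m n"
proof -
  have "isCont (\<lambda>s. \<bar>al s\<bar> + \<bar>be s\<bar>) x" for x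
    using isCont_al isCont_be by (auto intro!: continuous_intros)
  then obtain K where K: "K \<ge> 1" "\<And>s. \<bar>s\<bar> \<le> N \<Longrightarrow> \<bar>\<bar>al s\<bar> + \<bar>be s\<bar>\<bar> \<le> K"
    using isCont_bounded_on_interval[where N = N] by blast
  define C where "C = \<bar>a\<bar> + \<bar>b\<bar>"
  show thesis
  proof (rule that[of "\<lambda>n. C * (K * N) ^ n / fact n"])
    show "summable (\<lambda>n. C * (K * N) ^ n / fact n)"
      using summable_mult[OF summable_exp[of "K * N"], of C] by (simp add: field_simps)
  next
    fix n z assume z: "\<bar>z\<bar> \<le> N"
    have "C * K ^ n * \<bar>z\<bar> ^ n / fact n \<le> C * (K * N) ^ n / fact n"
      using K(1) z unfolding C_def power_mult_distrib mult.assoc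
      by (intro divide_right_mono mult_left_mono power_mono) auto
    then show "\<bar>U n z\<bar> \<le> C * (K * N) ^ n / fact n \<and> \<bar>V n z\<bar> \<le> C * (K * N) ^ n / fact n"
      using picard_terms_le[OF K(1) _ z, of n] K(2) unfolding C_def by fastforce
  qed
qed

lemma summable_picard_terms: "summable (\<lambda>n. U n z)" "summable (\<lambda>n. V n z)"
proof -
  obtain m where m: "summable m" "\<And>n y. \<bar>y\<bar> \<le> \<bar>z\<bar> \<Longrightarrow> \<bar>U n y\<bar> \<le> m n \<and> \<bar>V n y\<bar> \<le> m n"
    using picard_terms_summable_majorant[where N = "\<bar>z\<bar>"] by blast
  show "summable (\<lambda>n. U n z)" "summable (\<lambda>n. V n z)"
    by (rule summable_comparison_test'[OF m(1)], use m(2) in simp)+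
qed

lemma has_real_derivative_picard_series:
  "((\<lambda>z. \<Sum>n. U n z) has_real_derivative (\<Sum>n. V n x)) (at x)"
  "((\<lambda>z. \<Sum>n. V n z) has_real_derivative al x * (\<Sum>n. V n x) + be x * (\<Sum>n. U n x)) (at x)"
proof -
  define N where "N = \<bar>x\<bar> + 1"
  obtain m where m: "summable m" "\<And>n y. \<bar>y\<bar> \<le> N \<Longrightarrow> \<bar>U n y\<bar> \<le> m n \<and> \<bar>V n y\<bar> \<le> m n"
    using picard_terms_summable_majorant[where N = N] by blast
  have "isCont (\<lambda>s. \<bar>al s\<bar> + \<bar>be s\<bar>) y" for y
    using isCont_al isCont_be by (auto intro!: continuous_intros)
  then obtain K where K: "\<And>y. \<bar>y\<bar> \<le> N \<Longrightarrow> \<bar>\<bar>al y\<bar> + \<bar>be y\<bar>\<bar> \<le> K"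
    using isCont_bounded_on_interval[where N = N] by blast
  have V'_le: "\<bar>al y * V n y + be y * U n y\<bar> \<le> K * m n" if "\<bar>y\<bar> \<le> N" for n y
  proof -
    have "\<bar>al y * V n y + be y * U n y\<bar> \<le> \<bar>al y\<bar> * \<bar>V n y\<bar> + \<bar>be y\<bar> * \<bar>U n y\<bar>"
      by (simp add: abs_mult[symmetric] abs_triangle_ineq)
    also have "\<dots> \<le> (\<bar>al y\<bar> + \<bar>be y\<bar>) * m n"
      using m(2)[OF that, of n] by (simp add: distrib_right add_mono mult_left_mono)
    also have "\<dots> \<le> K * m n"
      using K[OF that] m(2)[OF that, of n] by (intro mult_right_mono) auto
    finally show ?thesis .
  qed
  have "\<bar>x\<bar> < N" unfolding N_def by simp
  have "((\<lambda>z. \<Sum>n. U (Suc n) z) has_real_derivative (\<Sum>n. V n x)) (at x)"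
    using picard_terms_Suc(1) m summable_picard_terms(1)[THEN summable_ignore_initial_segment[of _ 1]]
      \<open>\<bar>x\<bar> < N\<close> by (intro has_real_derivative_suminf[where N = N and m = m]) auto
  from DERIV_add[OF DERIV_const[of a] this]
  show "((\<lambda>z. \<Sum>n. U n z) has_real_derivative (\<Sum>n. V n x)) (at x)"
    using suminf_split_head[OF summable_picard_terms(1)] by simp
  have "((\<lambda>z. \<Sum>n. V (Suc n) z) has_real_derivative (\<Sum>n. al x * V n x + be x * U n x)) (at x)"
    using picard_terms_Suc(2) V'_le m(1) summable_picard_terms(2)[THEN summable_ignore_initial_segment[of _ 1]]
      \<open>\<bar>x\<bar> < N\<close> by (intro has_real_derivative_suminf[where N = N and m = "\<lambda>n. K * m n"] summable_mult) auto
  moreover have "(\<Sum>n. al x * V n x + be x * U n x) = al x * (\<Sum>n. V n x) + be x * (\<Sum>n. U n x)"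
    using summable_picard_terms[of x]
    by (simp add: suminf_add[symmetric] suminf_mult summable_mult del: picard_terms.simps)
  ultimately show "((\<lambda>z. \<Sum>n. V n z) has_real_derivative al x * (\<Sum>n. V n x) + be x * (\<Sum>n. U n x)) (at x)"
    using DERIV_add[OF DERIV_const[of b]] suminf_split_head[OF summable_picard_terms(2)] by fastforce
qed

lemma linear_second_order_ode_exists:
  "\<exists>u v. u 0 = a \<and> v 0 = b \<and> (\<forall>x. (u has_real_derivative v x) (at x) \<and>
      (v has_real_derivative al x * v x + be x * u x) (at x))"
proof -
  have "(\<Sum>n. U (Suc n) 0) = 0" "(\<Sum>n. V (Suc n) 0) = 0"
    by (simp_all add: picard_terms_Suc del: picard_terms.simps)
  then have "(\<Sum>n. U n 0) = a" "(\<Sum>n. V n 0) = b"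
    using suminf_split_head[OF summable_picard_terms(1), of 0]
      suminf_split_head[OF summable_picard_terms(2), of 0] by simp_all
  with has_real_derivative_picard_series show ?thesis
    by (intro exI[of _ "\<lambda>z. \<Sum>n. U n z"] exI[of _ "\<lambda>z. \<Sum>n. V n z"] conjI allI) auto
qed

end

section \<open>The damped Hill equation\<close>

lemma has_vector_derivative_vec:
  fixes F :: "real \<Rightarrow> 'a::euclidean_space ^ 'n"
  assumes "\<And>i. ((\<lambda>z. F z $ i) has_vector_derivative D $ i) (at x)"
  shows "(F has_vector_derivative D) (at x)"
proof -
  have axis: "bounded_linear (axis i :: 'a \<Rightarrow> 'a ^ 'n)" for i
    by (rule linear_conv_bounded_linear[THEN iffD1], rule linearI) (auto simp: axis_def vec_eq_iff)
  have sum_axis: "(\<Sum>i\<in>UNIV. axis i (v $ i)) = v" for v :: "'a ^ 'n"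
    by (simp add: vec_eq_iff axis_def sum_component if_distrib sum.delta' cong: if_cong)
  have "((\<lambda>z. \<Sum>i\<in>UNIV. axis i (F z $ i)) has_vector_derivative (\<Sum>i\<in>UNIV. axis i (D $ i))) (at x)"
    by (intro has_vector_derivative_sum bounded_linear.has_vector_derivative[OF axis] assms)
  then show ?thesis
    by (simp add: sum_axis)
qed

lemma has_vector_derivative_vec_nth:
  "(F has_vector_derivative D) (at x) \<Longrightarrow> ((\<lambda>z. F z $ i) has_vector_derivative D $ i) (at x)"
  by (rule bounded_linear.has_vector_derivative[OF bounded_linear_vec_nth])

definition damped_hill_sol ::
    "real \<Rightarrow> (real \<Rightarrow> real) \<Rightarrow> (real \<Rightarrow> complex) \<Rightarrow> (real \<Rightarrow> complex) \<Rightarrow> bool" where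
  "damped_hill_sol tau B y y' \<longleftrightarrow>
     (\<forall>z. (y has_vector_derivative y' z) (at z) \<and>
          (y' has_vector_derivative of_real tau * y' z - of_real (B z) * y z) (at z))"

lemma eq_exp_if_has_vector_derivative_scaled:
  fixes g :: "real \<Rightarrow> complex"
  assumes g: "\<And>z. (g has_vector_derivative of_real tau * g z) (at z)"
  shows "g z = of_real (exp (tau * z)) * g 0"
proof -
  define h where "h z = of_real (exp (- tau * z)) * g z" for z
  have "(h has_vector_derivative 0) (at z within UNIV)" for z
  proof -
    have e: "((\<lambda>z. exp (- tau * z)) has_real_derivative - tau * exp (- tau * z)) (at z)"
      by (auto intro!: derivative_eq_intros)
    have "(h has_vector_derivative of_real (exp (- tau * z)) * (of_real tau * g z)
        + of_real (- tau * exp (- tau * z)) * g z) (at z)"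
      unfolding h_def by (intro has_vector_derivative_mult has_vector_derivative_of_real e g)
    then show ?thesis by (simp add: algebra_simps)
  qed
  then have "h z = h 0"
    using has_vector_derivative_zero_constant[OF convex_UNIV] by (metis UNIV_I)
  then have "of_real (exp (tau * z)) * h z = of_real (exp (tau * z)) * g 0"
    by (simp add: h_def)
  moreover have "of_real (exp (tau * z)) * h z = g z"
    by (simp add: h_def mult.assoc[symmetric] of_real_mult[symmetric] exp_add[symmetric])
  ultimately show ?thesis by simp
qed

lemma damped_hill_wronskian:
  assumes u: "damped_hill_sol tau B u u'" and w: "damped_hill_sol tau B w w'"
  shows "u z * w' z - u' z * w z = of_real (exp (tau * z)) * (u 0 * w' 0 - u' 0 * w 0)"
proof (rule eq_exp_if_has_vector_derivative_scaled)
  fix z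
  have "((\<lambda>z. u z * w' z - u' z * w z) has_vector_derivative
       u z * (of_real tau * w' z - of_real (B z) * w z) + u' z * w' z
        - (u' z * w' z + (of_real tau * u' z - of_real (B z) * u z) * w z)) (at z)"
    using u w unfolding damped_hill_sol_def
    by (intro has_vector_derivative_diff has_vector_derivative_mult) auto
  then show "((\<lambda>z. u z * w' z - u' z * w z) has_vector_derivative
       of_real tau * (u z * w' z - u' z * w z)) (at z)"
    by (simp add: algebra_simps)
qed

lemma damped_hill_sol_eq_combination:
  assumes u: "damped_hill_sol tau B u u'" and w: "damped_hill_sol tau B w w'"
    and init: "u 0 = 1" "u' 0 = 0" "w 0 = 0" "w' 0 = 1"
    and y: "damped_hill_sol tau B y y'"
  shows "y z = y 0 * u z + y' 0 * w z" "y' z = y 0 * u' z + y' 0 * w' z"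
proof -
  define E where "E = (of_real (exp (tau * z)) :: complex)"
  have "E \<noteq> 0" unfolding E_def by simp
  have W: "u z * w' z - u' z * w z = E"
    using damped_hill_wronskian[OF u w, of z] init unfolding E_def by simp
  have Wu: "u z * y' z - u' z * y z = E * y' 0"
    using damped_hill_wronskian[OF u y, of z] init unfolding E_def by simp
  have Ww: "w z * y' z - w' z * y z = - E * y 0"
    using damped_hill_wronskian[OF w y, of z] init unfolding E_def by simp
  have "E * (y 0 * u z + y' 0 * w z) = w z * (E * y' 0) - u z * (- E * y 0)"
    by (simp add: algebra_simps)
  also have "\<dots> = w z * (u z * y' z - u' z * y z) - u z * (w z * y' z - w' z * y z)"
    by (simp only: Wu Ww)
  also have "\<dots> = (u z * w' z - u' z * w z) * y z"
    by (simp add: algebra_simps)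
  finally show "y z = y 0 * u z + y' 0 * w z"
    using W \<open>E \<noteq> 0\<close> by simp
  have "E * (y 0 * u' z + y' 0 * w' z) = w' z * (E * y' 0) - u' z * (- E * y 0)"
    by (simp add: algebra_simps)
  also have "\<dots> = w' z * (u z * y' z - u' z * y z) - u' z * (w z * y' z - w' z * y z)"
    by (simp only: Wu Ww)
  also have "\<dots> = (u z * w' z - u' z * w z) * y' z"
    by (simp add: algebra_simps)
  finally show "y' z = y 0 * u' z + y' 0 * w' z"
    using W \<open>E \<noteq> 0\<close> by simp
qed

lemma damped_hill_sol_shift:
  assumes y: "damped_hill_sol tau B y y'" and B: "\<And>z. B (z + s) = B z"
  shows "damped_hill_sol tau B (\<lambda>z. y (z + s)) (\<lambda>z. y' (z + s))"
  unfolding damped_hill_sol_def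
proof
  fix z
  have shift: "((\<lambda>z. g (z + s)) has_vector_derivative D) (at z)"
    if "(g has_vector_derivative D) (at (z + s))" for g :: "real \<Rightarrow> complex" and D
  proof -
    have "((\<lambda>z. z + s) has_derivative (\<lambda>h. h)) (at z)"
      by (auto intro!: derivative_eq_intros)
    from diff_chain_at[OF this that[unfolded has_vector_derivative_def]] show ?thesis
      by (simp add: has_vector_derivative_def o_def)
  qed
  show "((\<lambda>z. y (z + s)) has_vector_derivative y' (z + s)) (at z) \<and>
        ((\<lambda>z. y' (z + s)) has_vector_derivative of_real tau * y' (z + s) - of_real (B z) * y (z + s)) (at z)"
    using y B[of z] unfolding damped_hill_sol_def by (metis shift)
qed

lemma damped_hill_sol_of_real:
  assumes "\<And>x. (u has_real_derivative v x) (at x) \<and> (v has_real_derivative tau * v x + - B x * u x) (at x)"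
  shows "damped_hill_sol tau B (\<lambda>z. of_real (u z)) (\<lambda>z. of_real (v z))"
  unfolding damped_hill_sol_def
proof
  fix z
  have "((\<lambda>z. complex_of_real (v z)) has_vector_derivative of_real (tau * v z + - B z * u z)) (at z)"
    using assms by (intro has_vector_derivative_of_real) auto
  then show "((\<lambda>z. complex_of_real (u z)) has_vector_derivative of_real (v z)) (at z) \<and>
      ((\<lambda>z. complex_of_real (v z)) has_vector_derivative
        of_real tau * of_real (v z) - of_real (B z) * of_real (u z)) (at z)"
    using assms by (auto intro!: has_vector_derivative_of_real simp: algebra_simps)
qed

section \<open>Equation (P) and its fundamental matrix\<close>

definition P_damping :: "real \<Rightarrow> real \<Rightarrow> real" where
  "P_damping c lam = 2 * c * tw_gamma c * lam"

definition P_potential :: "real \<Rightarrow> (real \<Rightarrow> real) \<Rightarrow> real \<Rightarrow> real \<Rightarrow> real" where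
  "P_potential c f lam z = tw_gamma c * (lam\<^sup>2 + cos (f z))"

abbreviation P_sol :: "real \<Rightarrow> (real \<Rightarrow> real) \<Rightarrow> real \<Rightarrow> (real \<Rightarrow> complex) \<Rightarrow> (real \<Rightarrow> complex) \<Rightarrow> bool" where
  "P_sol c f lam \<equiv> damped_hill_sol (P_damping c lam) (P_potential c f lam)"

lemma P_matrix_mult_nth [simp]:
  "(P_matrix c f (of_real lam) z ** G) $ 1 $ j = G $ 2 $ j"
  "(P_matrix c f (of_real lam) z ** G) $ 2 $ j =
     of_real (P_damping c lam) * G $ 2 $ j - of_real (P_potential c f lam z) * G $ 1 $ j"
  by (simp_all add: P_matrix_def matrix_matrix_mult_def sum_2 P_damping_def P_potential_def algebra_simps)

lemma solves_P_imp_P_sol: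
  assumes "solves_P c f (of_real lam) p"
  obtains p' where "P_sol c f lam p p'"
proof -
  from assms obtain p' p'' where p: "\<And>z. (p has_vector_derivative p' z) (at z)"
    and p': "\<And>z. (p' has_vector_derivative p'' z) (at z)"
    and eq: "\<And>z. p'' z - 2 * of_real c * of_real (tw_gamma c) * of_real lam * p' z
                  + of_real (tw_gamma c) * ((of_real lam)\<^sup>2 + of_real (cos (f z))) * p z = 0"
    unfolding solves_P_def by blast
  have "p'' z = of_real (P_damping c lam) * p' z - of_real (P_potential c f lam z) * p z" for z
    using eq[of z] by (simp add: P_damping_def P_potential_def algebra_simps)
  with p p' have "P_sol c f lam p p'"
    unfolding damped_hill_sol_def by simp
  then show thesis by (rule that)
qed

lemma fundamental_matrix_column:
  assumes "fundamental_matrix c f (of_real lam) F"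
  shows "P_sol c f lam (\<lambda>z. F z $ 1 $ j) (\<lambda>z. F z $ 2 $ j)"
  unfolding damped_hill_sol_def
proof
  fix z
  have "(F has_vector_derivative P_matrix c f (of_real lam) z ** F z) (at z)"
    using assms unfolding fundamental_matrix_def by blast
  from has_vector_derivative_vec_nth[OF has_vector_derivative_vec_nth[OF this]]
  show "((\<lambda>z. F z $ 1 $ j) has_vector_derivative F z $ 2 $ j) (at z) \<and>
        ((\<lambda>z. F z $ 2 $ j) has_vector_derivative
           of_real (P_damping c lam) * F z $ 2 $ j - of_real (P_potential c f lam z) * F z $ 1 $ j) (at z)"
    by (metis P_matrix_mult_nth)
qed

definition phase_vector :: "(real \<Rightarrow> complex) \<Rightarrow> (real \<Rightarrow> complex) \<Rightarrow> real \<Rightarrow> complex ^ 2" where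
  "phase_vector y y' z = vector [y z, y' z]"

lemma fundamental_matrix_mult_phase_vector:
  assumes F: "fundamental_matrix c f (of_real lam) F" and y: "P_sol c f lam y y'"
  shows "phase_vector y y' z = F z *v phase_vector y y' 0"
proof -
  have "F 0 = mat 1"
    using F unfolding fundamental_matrix_def by blast
  then have init: "F 0 $ 1 $ 1 = 1" "F 0 $ 2 $ 1 = 0" "F 0 $ 1 $ 2 = 0" "F 0 $ 2 $ 2 = 1"
    by (simp_all add: mat_def)
  note combination = damped_hill_sol_eq_combination[OF
      fundamental_matrix_column[OF F, of 1] fundamental_matrix_column[OF F, of 2] init y]
  show ?thesis
    by (simp add: vec_eq_iff forall_2 matrix_vector_mult_def sum_2 phase_vector_def
        combination[of z] mult.commute)
qed

lemma fundamental_matrix_unique: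
  assumes F: "fundamental_matrix c f (of_real lam) F" and G: "fundamental_matrix c f (of_real lam) G"
  shows "G = F"
proof
  fix z
  have "G 0 = mat 1"
    using G unfolding fundamental_matrix_def by blast
  note column = fundamental_matrix_mult_phase_vector[OF F fundamental_matrix_column[OF G], of _ z]
  show "G z = F z"
    using column[of 1] column[of 2] \<open>G 0 = mat 1\<close>
    by (simp add: vec_eq_iff forall_2 phase_vector_def matrix_vector_mult_def sum_2 mat_def)
qed

lemma monodromy_eq:
  assumes "fundamental_matrix c f (of_real lam) F"
  shows "monodromy c f T (of_real lam) = F T"
  unfolding monodromy_def using assms fundamental_matrix_unique by blast

lemma det_fundamental_matrix:
  assumes F: "fundamental_matrix c f (of_real lam) F"
  shows "det (F z) = of_real (exp (P_damping c lam * z))"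
proof -
  have "F 0 = mat 1"
    using F unfolding fundamental_matrix_def by blast
  with damped_hill_wronskian[OF fundamental_matrix_column[OF F, of 1] fundamental_matrix_column[OF F, of 2], of z]
  show ?thesis
    by (simp add: det_2 mat_def mult.commute)
qed

lemma fundamental_matrix_upper_right_nonzero:
  assumes F: "fundamental_matrix c f (of_real lam) F"
  obtains z where "F z $ 1 $ 2 \<noteq> 0"
proof -
  have "F 0 = mat 1"
    using F unfolding fundamental_matrix_def by blast
  have "((\<lambda>z. F z $ 1 $ 2) has_vector_derivative F 0 $ 2 $ 2) (at 0)"
    using fundamental_matrix_column[OF F, of 2] unfolding damped_hill_sol_def by blast
  then have "\<not> (\<forall>z. F z $ 1 $ 2 = 0)"
    using \<open>F 0 = mat 1\<close> has_vector_derivative_const[of 0 "at 0"]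
      vector_derivative_unique_at by (fastforce simp: mat_def)
  then show thesis using that by blast
qed

lemma fundamental_matrix_exists:
  assumes f: "continuous_on UNIV f"
  obtains F where "fundamental_matrix c f (of_real lam) F" "\<And>z i j. F z $ i $ j \<in> \<real>"
proof -
  let ?tau = "P_damping c lam" and ?B = "P_potential c f lam"
  have "isCont (\<lambda>z. - ?B z) x" for x
    using f unfolding P_potential_def by (auto intro!: continuous_intros simp: continuous_on_eq_continuous_at)
  then have "\<exists>u v. u 0 = a \<and> v 0 = b \<and> (\<forall>x. (u has_real_derivative v x) (at x) \<and>
      (v has_real_derivative ?tau * v x + - ?B x * u x) (at x))" for a b
    by (intro linear_second_order_ode_exists) auto
  then obtain u1 v1 u2 v2 where
        init: "u1 0 = 1" "v1 0 = 0" "u2 0 = 0" "v2 0 = 1"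
    and sol1: "\<And>x. (u1 has_real_derivative v1 x) (at x) \<and> (v1 has_real_derivative ?tau * v1 x + - ?B x * u1 x) (at x)"
    and sol2: "\<And>x. (u2 has_real_derivative v2 x) (at x) \<and> (v2 has_real_derivative ?tau * v2 x + - ?B x * u2 x) (at x)"
    by metis
  define F :: "real \<Rightarrow> complex^2^2" where
    "F z = (\<chi> i j. of_real (if i = 1 then (if j = 1 then u1 z else u2 z) else (if j = 1 then v1 z else v2 z)))" for z
  have "fundamental_matrix c f (of_real lam) F"
    unfolding fundamental_matrix_def
  proof (intro conjI allI has_vector_derivative_vec)
    show "F 0 = mat 1"
      by (simp add: F_def vec_eq_iff mat_def forall_2 init)
    fix z i j
    show "((\<lambda>z. F z $ i $ j) has_vector_derivative (P_matrix c f (complex_of_real lam) z ** F z) $ i $ j) (at z)"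
      using damped_hill_sol_of_real[OF sol1] damped_hill_sol_of_real[OF sol2] exhaust_2[of i] exhaust_2[of j]
      unfolding damped_hill_sol_def by (auto simp: F_def)
  qed
  moreover have "F z $ i $ j \<in> \<real>" for z i j
    by (simp add: F_def)
  ultimately show thesis by (rule that)
qed

lemma periodic_add_of_int_mult:
  assumes "\<And>z. g (z + T) = g z"
  shows "g (z + of_int n * T) = (g z :: 'a)"
proof (induction n arbitrary: z rule: int_induct[where k = 0])
  case (step1 i)
  have "g (z + of_int (i + 1) * T) = g ((z + T) + of_int i * T)"
    by (simp add: algebra_simps)
  then show ?case
    using step1 assms by simp
next
  case (step2 i)
  have "g (z + of_int (i - 1) * T) = g ((z - T) + of_int i * T)"
    by (simp add: algebra_simps)
  then show ?case
    using step2 assms[of "z - T"] by simp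
qed simp

lemma P_potential_periodic:
  assumes "period_mod_2pi f T"
  shows "P_potential c f lam (z + T) = P_potential c f lam z"
proof -
  from assms obtain k :: int where "f (z + T) = f z + 2 * pi * of_int k"
    unfolding period_mod_2pi_def by blast
  then show ?thesis
    by (simp add: P_potential_def cos_add)
qed

lemma fundamental_matrix_mult_phase_vector_shift:
  assumes F: "fundamental_matrix c f (of_real lam) F" and y: "P_sol c f lam y y'"
    and per: "\<And>z. P_potential c f lam (z + T) = P_potential c f lam z"
  shows "phase_vector y y' (z + of_int n * T) = F z *v phase_vector y y' (of_int n * T)"
proof -
  have "P_sol c f lam (\<lambda>z. y (z + of_int n * T)) (\<lambda>z. y' (z + of_int n * T))"
    using y periodic_add_of_int_mult[where g = "P_potential c f lam", OF per] by (rule damped_hill_sol_shift)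
  from fundamental_matrix_mult_phase_vector[OF F this] show ?thesis
    by (simp add: phase_vector_def)
qed

text \<open>A bounded solution has bounded derivative along the lattice \<open>\<int> T\<close>: the first row of
  \<open>F z\<^sub>1\<close> expresses \<open>y (z\<^sub>1 + n T)\<close> in terms of \<open>y (n T)\<close> and \<open>y' (n T)\<close>, with
  a nonzero coefficient in front of \<open>y' (n T)\<close>.\<close>
lemma bounded_phase_vector_samples:
  assumes F: "fundamental_matrix c f (of_real lam) F" and y: "P_sol c f lam y y'"
    and per: "\<And>z. P_potential c f lam (z + T) = P_potential c f lam z"
    and bounded: "bounded (range y)"
  shows "bounded (range (\<lambda>n::int. phase_vector y y' (of_int n * T)))"
proof -
  obtain B where B: "\<And>z. cmod (y z) \<le> B"
    using bounded unfolding bounded_iff by blast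
  obtain z1 where z1: "F z1 $ 1 $ 2 \<noteq> 0"
    using fundamental_matrix_upper_right_nonzero[OF F] by blast
  define K where "K = (B + cmod (F z1 $ 1 $ 1) * B) / cmod (F z1 $ 1 $ 2)"
  have y'_le: "cmod (y' (of_int n * T)) \<le> K" for n :: int
  proof -
    have "y (z1 + of_int n * T) = F z1 $ 1 $ 1 * y (of_int n * T) + F z1 $ 1 $ 2 * y' (of_int n * T)"
      using arg_cong[OF fundamental_matrix_mult_phase_vector_shift[OF F y per, of z1 n], of "\<lambda>v. v $ 1"]
      by (simp add: phase_vector_def matrix_vector_mult_def sum_2)
    then have "cmod (F z1 $ 1 $ 2) * cmod (y' (of_int n * T))
        = cmod (y (z1 + of_int n * T) - F z1 $ 1 $ 1 * y (of_int n * T))"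
      by (simp add: norm_mult[symmetric])
    also have "\<dots> \<le> cmod (y (z1 + of_int n * T)) + cmod (F z1 $ 1 $ 1) * cmod (y (of_int n * T))"
      by (metis norm_mult norm_triangle_ineq4)
    also have "\<dots> \<le> B + cmod (F z1 $ 1 $ 1) * B"
      using B by (intro add_mono mult_left_mono) auto
    finally show ?thesis
      using z1 by (simp add: K_def field_simps)
  qed
  have "norm (phase_vector y y' (of_int n * T)) \<le> B + K" for n :: int
  proof -
    have "norm (phase_vector y y' (of_int n * T)) \<le> cmod (y (of_int n * T)) + cmod (y' (of_int n * T))"
      unfolding norm_vec_def by (rule order_trans[OF L2_set_le_sum]) (auto simp: sum_2 phase_vector_def)
    then show ?thesis
      using B[of "of_int n * T"] y'_le[of n] by simp
  qed
  then show ?thesis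
    unfolding bounded_iff by blast
qed

section \<open>Bounded orbits of \<open>2 \<times> 2\<close> matrices\<close>

lemma norm_eq_1_if_bounded_int_geometric:
  fixes y :: "int \<Rightarrow> 'a::real_normed_field"
  assumes step: "\<And>n. y (n + 1) = q * y n" and "bounded (range y)" and "y 0 \<noteq> 0"
  shows "norm q = 1"
proof -
  obtain B where B: "\<And>n. norm (y n) \<le> B"
    using \<open>bounded (range y)\<close> unfolding bounded_iff by blast
  have forward: "y (int k) = q ^ k * y 0" for k
  proof (induction k)
    case (Suc k)
    then show ?case
      using step[of "int k"] by (simp add: add.commute)
  qed simp
  have backward: "y 0 = q ^ k * y (- int k)" for k
  proof (induction k)
    case (Suc k)
    then show ?case
      using step[of "- int (Suc k)"] by (simp add: algebra_simps)
  qed simp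
  have "\<not> norm q < 1"
  proof
    assume "norm q < 1"
    have "norm (y 0) \<le> norm q ^ k * B" for k
      using backward[of k] B[of "- int k"] by (simp add: norm_mult norm_power mult_left_mono)
    moreover have "(\<lambda>k. norm q ^ k * B) \<longlonglongrightarrow> 0"
      using \<open>norm q < 1\<close> by (auto intro!: tendsto_mult_left_zero LIMSEQ_power_zero)
    ultimately have "norm (y 0) \<le> 0"
      by (intro LIMSEQ_le_const[of "\<lambda>k. norm q ^ k * B"]) auto
    then show False
      using \<open>y 0 \<noteq> 0\<close> by simp
  qed
  moreover have "\<not> norm q > 1"
  proof
    assume "norm q > 1"
    then obtain k where "B / norm (y 0) < norm q ^ k"
      using real_arch_pow by blast
    then have "B < norm (y (int k))"
      using \<open>y 0 \<noteq> 0\<close> by (simp add: forward norm_mult norm_power field_simps)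
    then show False
      using B by (meson not_le)
  qed
  ultimately show ?thesis
    by linarith
qed

definition cross2 :: "'a::comm_ring_1 ^ 2 \<Rightarrow> 'a ^ 2 \<Rightarrow> 'a" where
  "cross2 u v = u $ 1 * v $ 2 - u $ 2 * v $ 1"

lemma cross2_matrix_vector_mult: "cross2 (M *v u) (M *v v) = det M * cross2 u v"
  unfolding cross2_def det_2 matrix_vector_mult_def sum_2 by (simp add: algebra_simps)

lemma norm_cross2_le:
  fixes u v :: "'a::real_normed_field ^ 2"
  shows "norm (cross2 u v) \<le> 2 * (norm u * norm v)"
proof -
  have "norm (cross2 u v) \<le> norm (u $ 1) * norm (v $ 2) + norm (u $ 2) * norm (v $ 1)"
    unfolding cross2_def norm_mult[symmetric] by (rule norm_triangle_ineq4)
  also have "\<dots> \<le> norm u * norm v + norm u * norm v"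
    by (intro add_mono mult_mono norm_ge_zero Finite_Cartesian_Product.norm_nth_le)
  finally show ?thesis by simp
qed

lemma parallel_if_cross2_eq_0:
  fixes u v :: "'a::field ^ 2"
  assumes "cross2 u v = 0" "u \<noteq> 0"
  obtains rho where "v = rho *s u"
proof (cases "u $ 1 = 0")
  case True
  then have "u $ 2 \<noteq> 0"
    using \<open>u \<noteq> 0\<close> by (auto simp: vec_eq_iff forall_2)
  with True assms(1) have "v = (v $ 2 / u $ 2) *s u"
    by (simp add: cross2_def vec_eq_iff forall_2)
  then show thesis by (rule that)
next
  case False
  with assms(1) have "v = (v $ 1 / u $ 1) *s u"
    by (simp add: cross2_def vec_eq_iff forall_2 field_simps)
  then show thesis by (rule that)
qed

lemma bounded_orbit_cross2_eq_0:
  fixes M :: "'a::real_normed_field ^ 2 ^ 2" and x :: "int \<Rightarrow> 'a ^ 2"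
  assumes orbit: "\<And>n. x (n + 1) = M *v x n" and bounded: "bounded (range x)"
    and "norm (det M) \<noteq> 1"
  shows "cross2 (x 0) (x 1) = 0"
proof -
  obtain B where B: "\<And>n. norm (x n) \<le> B"
    using bounded unfolding bounded_iff by blast
  define D where "D n = cross2 (x n) (x (n + 1))" for n
  have "D (n + 1) = det M * D n" for n
    using cross2_matrix_vector_mult[of M "x n" "x (n + 1)"] orbit[of n] orbit[of "n + 1"]
    by (simp add: D_def add.assoc)
  moreover have "bounded (range D)"
  proof -
    have B2: "norm (x n) * norm (x (n + 1)) \<le> B * B" for n
      using B by (meson mult_mono norm_ge_zero order_trans)
    have "norm (D n) \<le> 2 * (B * B)" for n
      using B2[of n] norm_cross2_le[of "x n" "x (n + 1)"] unfolding D_def by linarith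
    then show ?thesis
      unfolding bounded_iff by blast
  qed
  ultimately show ?thesis
    using norm_eq_1_if_bounded_int_geometric[of D "det M"] \<open>norm (det M) \<noteq> 1\<close>
    unfolding D_def by fastforce
qed

lemma bounded_orbit_eigenvector:
  fixes M :: "'a::real_normed_field ^ 2 ^ 2" and x :: "int \<Rightarrow> 'a ^ 2"
  assumes orbit: "\<And>n. x (n + 1) = M *v x n" and bounded: "bounded (range x)"
    and "x 0 \<noteq> 0" "det M \<noteq> 0" "norm (det M) \<noteq> 1"
  obtains rho where "M *v x 0 = rho *s x 0" "norm rho = 1"
proof -
  obtain rho where rho: "x 1 = rho *s x 0"
    using parallel_if_cross2_eq_0[OF bounded_orbit_cross2_eq_0[OF orbit bounded \<open>norm (det M) \<noteq> 1\<close>]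
        \<open>x 0 \<noteq> 0\<close>] by blast
  have inj: "inj ((*v) M)"
    using \<open>det M \<noteq> 0\<close> by (simp add: inj_matrix_vector_mult invertible_det_nz)
  have geometric: "x (n + 1) = rho *s x n" for n
  proof (induction n rule: int_induct[where k = 0])
    case (step1 i)
    then show ?case
      using orbit[of "i + 1"] orbit[of i] by (simp add: vector_scalar_commute add.assoc)
  next
    case (step2 i)
    have "M *v x i = M *v (rho *s x (i - 1))"
      using step2 orbit[of i] orbit[of "i - 1"] by (simp add: vector_scalar_commute)
    then show ?case
      using inj by (simp add: inj_eq)
  qed (use rho in simp)
  obtain i where "x 0 $ i \<noteq> 0"
    using \<open>x 0 \<noteq> 0\<close> by (auto simp: vec_eq_iff)
  moreover have "bounded (range (\<lambda>n. x n $ i))"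
    using bounded order_trans[OF Finite_Cartesian_Product.norm_nth_le] unfolding bounded_iff by blast
  ultimately have "norm rho = 1"
    using geometric by (intro norm_eq_1_if_bounded_int_geometric[of "\<lambda>n. x n $ i"]) auto
  moreover have "M *v x 0 = rho *s x 0"
    using orbit[of 0] rho by simp
  ultimately show thesis
    using that by blast
qed

lemma eigenvalue_char_poly_2:
  fixes M :: "'a::field ^ 2 ^ 2"
  assumes "M *v v = rho *s v" "v \<noteq> 0"
  shows "rho\<^sup>2 - (M $ 1 $ 1 + M $ 2 $ 2) * rho + det M = 0"
proof -
  let ?p = "rho\<^sup>2 - (M $ 1 $ 1 + M $ 2 $ 2) * rho + det M"
  have e1: "rho * v $ 1 = M $ 1 $ 1 * v $ 1 + M $ 1 $ 2 * v $ 2"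
    and e2: "rho * v $ 2 = M $ 2 $ 1 * v $ 1 + M $ 2 $ 2 * v $ 2"
    using assms(1) by (simp_all add: vec_eq_iff forall_2 matrix_vector_mult_def sum_2)
  have "?p * v $ 1 = (rho - M $ 2 $ 2) * (rho * v $ 1 - (M $ 1 $ 1 * v $ 1 + M $ 1 $ 2 * v $ 2))
      + M $ 1 $ 2 * (rho * v $ 2 - (M $ 2 $ 1 * v $ 1 + M $ 2 $ 2 * v $ 2))"
    by (simp add: det_2 algebra_simps power2_eq_square)
  moreover have "?p * v $ 2 = (rho - M $ 1 $ 1) * (rho * v $ 2 - (M $ 2 $ 1 * v $ 1 + M $ 2 $ 2 * v $ 2))
      + M $ 2 $ 1 * (rho * v $ 1 - (M $ 1 $ 1 * v $ 1 + M $ 1 $ 2 * v $ 2))"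
    by (simp add: det_2 algebra_simps power2_eq_square)
  ultimately have "?p * v $ 1 = 0" "?p * v $ 2 = 0"
    using e1 e2 by simp_all
  then show ?thesis
    using \<open>v \<noteq> 0\<close> by (auto simp: vec_eq_iff forall_2)
qed

lemma unit_root_of_real_quadratic:
  fixes rho :: complex and t d :: real
  assumes "rho\<^sup>2 - of_real t * rho + of_real d = 0" "cmod rho = 1" "d \<noteq> 1"
  shows "rho\<^sup>2 = 1"
proof -
  obtain x y where rho: "rho = Complex x y" by (cases rho)
  have unit: "x\<^sup>2 + y\<^sup>2 = 1"
    using assms(2) rho by (simp add: cmod_def)
  have re: "x\<^sup>2 - y\<^sup>2 - t * x + d = 0" and im: "2 * x * y - t * y = 0"
    using assms(1) rho by (auto simp: complex_eq_iff power2_eq_square algebra_simps)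
  have "y = 0"
  proof (rule ccontr)
    assume "y \<noteq> 0"
    then have "t = 2 * x" using im by (simp add: algebra_simps)
    then have "d = x\<^sup>2 + y\<^sup>2" using re by (simp add: power2_eq_square algebra_simps)
    then show False using unit assms(3) by simp
  qed
  then show ?thesis
    using rho unit by (simp add: complex_eq_iff power2_eq_square)
qed

lemma real_matrix_unit_eigenvalue_square_eq_1:
  fixes M :: "complex ^ 2 ^ 2"
  assumes real: "\<And>i j. M $ i $ j \<in> \<real>" and eigen: "M *v v = rho *s v" "v \<noteq> 0"
    and "cmod rho = 1" "det M \<noteq> 1"
  shows "rho\<^sup>2 = 1"
proof -
  have "M $ 1 $ 1 + M $ 2 $ 2 \<in> \<real>" "det M \<in> \<real>"
    using real by (auto simp: det_2)
  then obtain t d where t: "M $ 1 $ 1 + M $ 2 $ 2 = of_real t" and d: "det M = of_real d"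
    by (metis Reals_cases)
  have "rho\<^sup>2 - of_real t * rho + of_real d = 0"
    using eigenvalue_char_poly_2[OF eigen] unfolding t d .
  moreover have "d \<noteq> 1"
    using \<open>det M \<noteq> 1\<close> d by auto
  ultimately show ?thesis
    using unit_root_of_real_quadratic \<open>cmod rho = 1\<close> by blast
qed

section \<open>Floquet multipliers of bounded solutions\<close>

lemma periodic_traveling_waveD:
  assumes "periodic_traveling_wave c f T"
  shows "continuous_on UNIV f" "T > 0" "period_mod_2pi f T"
proof -
  from assms have "traveling_wave c f" "fundamental_period f T"
    unfolding periodic_traveling_wave_def by auto
  then obtain f' where f': "\<And>z. (f has_real_derivative f' z) (at z)"
    and "T > 0" "period_mod_2pi f T"
    unfolding traveling_wave_def fundamental_period_def by blast
  then show "continuous_on UNIV f" "T > 0" "period_mod_2pi f T"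
    by (auto intro!: continuous_at_imp_continuous_on DERIV_isCont[OF f'])
qed

lemma sigma_P_imp_bounded_P_sol:
  assumes "of_real lam \<in> sigma_P c f"
  obtains p p' where "P_sol c f lam p p'" "bounded (range p)" "\<exists>z. p z \<noteq> 0"
  using assms unfolding sigma_P_def by (blast elim: solves_P_imp_P_sol)

lemma bounded_P_sol_monodromy_eigenvector:
  assumes F: "fundamental_matrix c f (of_real lam) F"
    and per: "\<And>z. P_potential c f lam (z + T) = P_potential c f lam z"
    and p: "P_sol c f lam p p'" "bounded (range p)" "\<exists>z. p z \<noteq> 0"
    and det: "det (F T) \<noteq> 0" "cmod (det (F T)) \<noteq> 1"
  obtains rho v where "F T *v v = rho *s v" "v \<noteq> 0" "cmod rho = 1"
proof -
  define x where "x n = phase_vector p p' (of_int n * T)" for n :: int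
  have orbit: "x (n + 1) = F T *v x n" for n
    using fundamental_matrix_mult_phase_vector_shift[OF F p(1) per, of T n]
    by (simp add: x_def algebra_simps)
  have bounded: "bounded (range x)"
    unfolding x_def by (rule bounded_phase_vector_samples[OF F p(1) per p(2)])
  have "x 0 \<noteq> 0"
  proof
    assume "x 0 = 0"
    then have "phase_vector p p' z $ 1 = 0" for z
      using fundamental_matrix_mult_phase_vector[OF F p(1), of z] by (simp add: x_def)
    with p(3) show False
      by (simp add: phase_vector_def)
  qed
  with bounded_orbit_eigenvector[OF orbit bounded _ det] that show thesis
    by blast
qed

theorem lemma3p5:
  fixes c T lam :: real and f :: "real \<Rightarrow> real"
  assumes "periodic_traveling_wave c f T"
    and "c \<noteq> 0" and "c\<^sup>2 \<noteq> 1"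
    and "lam \<noteq> 0"
    and "complex_of_real lam \<in> sigma_P c f"
  shows "\<exists>rho. floquet_multiplier c f T (complex_of_real lam) rho \<and> rho\<^sup>2 = 1"
proof -
  note wave = periodic_traveling_waveD[OF assms(1)]
  then have per: "\<And>z. P_potential c f lam (z + T) = P_potential c f lam z"
    by (simp add: P_potential_periodic)
  obtain F where F: "fundamental_matrix c f (of_real lam) F" and real: "\<And>z i j. F z $ i $ j \<in> \<real>"
    using fundamental_matrix_exists[OF wave(1)] by blast
  obtain p p' where p: "P_sol c f lam p p'" "bounded (range p)" "\<exists>z. p z \<noteq> 0"
    using sigma_P_imp_bounded_P_sol[OF assms(5)] by blast
  have "P_damping c lam * T \<noteq> 0"
    using assms(2-4) wave(2) by (simp add: P_damping_def tw_gamma_def)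
  then have det: "det (F T) \<noteq> 0" "cmod (det (F T)) \<noteq> 1"
    by (simp_all add: det_fundamental_matrix[OF F])
  obtain rho v where rho: "F T *v v = rho *s v" "v \<noteq> 0" "cmod rho = 1"
    using bounded_P_sol_monodromy_eigenvector[OF F per p det] by blast
  moreover have "det (F T) \<noteq> 1"
    using det(2) by auto
  ultimately have "rho\<^sup>2 = 1"
    using real_matrix_unit_eigenvalue_square_eq_1[OF real] by blast
  with rho show ?thesis
    unfolding floquet_multiplier_def monodromy_eq[OF F] by blast
qed

end
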